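(* For every integer $n\ge 1$, $$B_{2^{n+1}-i}(t)-B_{2^{n}+i}(t)=\begin{cases} t(t-1)\,B_{2^{n-1}-i}(t) & \text{for } i=0,1,\dots,2^{n-1},\\ -t(t-1)\,B_{i-2^{n-1}}(t) & \text{for } i=2^{n-1}+1,\dots,2^{n}.\end{cases}$$
   Context: The Stern polynomials $B_n(t)\in\mathbb{Z}[t]$, $n\ge 0$, are defined by $B_0(t)=0$, $B_1(t)=1$, $B_{2n}(t)=tB_n(t)$ and $B_{2n+1}(t)=B_n(t)+B_{n+1}(t)$ for $n\ge 1$. *)

theory Defs
  imports "HOL-Computational_Algebra.Polynomial"
begin

function stern :: "nat \<Rightarrow> int poly" where
  "stern n = (if n = 0 then 0 else if n = 1 then 1
     else if even n then [:0, 1:] * stern (n div 2)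
     else stern (n div 2) + stern (n div 2 + 1))"
  by auto
termination
  by (relation "measure id") (auto elim: oddE)

declare stern.simps [simp del]

lemma stern_0: "stern 0 = 0" by (simp add: stern.simps)
lemma stern_1: "stern 1 = 1" by (simp add: stern.simps)
lemma stern_even: "n \<ge> 1 \<Longrightarrow> stern (2 * n) = [:0, 1:] * stern n"
  by (subst stern.simps) auto
lemma stern_odd: "n \<ge> 1 \<Longrightarrow> stern (2 * n + 1) = stern n + stern (n + 1)"
  by (subst stern.simps) auto

end

theory Submission
  imports Defs
begin

(* Extend the Stern polynomials to all integers as an odd function,
   B_{-k} = -B_k.  The recursions B_{2k} = t B_k and B_{2k+1} = B_k + B_{k+1}
   then hold for every integer k.  With this extension both cases of the theorem
   collapse into the single identity

     B_{2^(m+2) - i} - B_{2^(m+1) + i} = t (t - 1) B_{2^m - i}     (0 <= i <= 2^(m+1)),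

   where the index on the right may be negative; for i > 2^m it equals
   -t(t-1) B_{i - 2^m}.  The identity is proved by induction on m: the case m = 0
   is a computation with B_0, ..., B_4, and in the step one splits i by parity,
   so that each of the three Stern polynomials involved unfolds by one recursion
   step into instances of the induction hypothesis.  Finally the theorem is the
   instance m = n - 1, read separately for nonnegative and negative indices. *)

lemma stern_double: "stern (2 * n) = [:0, 1:] * stern n"
  by (cases "n = 0") (simp_all add: stern_0 stern_even)

lemma stern_double_plus_one: "stern (2 * n + 1) = stern n + stern (n + 1)"
  using stern_odd[of n] by (cases "n = 0") (simp_all add: stern_0 stern_1)

definition stern_int :: "int \<Rightarrow> int poly" where
  "stern_int k = (if k \<ge> 0 then stern (nat k) else - stern (nat (- k)))"

lemma stern_int_nonneg: "k \<ge> 0 \<Longrightarrow> stern_int k = stern (nat k)"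
  by (simp add: stern_int_def)

lemma stern_int_neg: "k < 0 \<Longrightarrow> stern_int k = - stern (nat (- k))"
  by (simp add: stern_int_def)

text \<open>Both Stern recursions survive the odd extension; for negative indices
  the odd recursion is the natural one read backwards.\<close>

lemma stern_int_double: "stern_int (2 * k) = [:0, 1:] * stern_int k"
proof (cases "k \<ge> 0")
  case True
  then have "nat (2 * k) = 2 * nat k" by simp
  with True show ?thesis by (simp add: stern_int_def stern_double)
next
  case False
  then have "nat (- (2 * k)) = 2 * nat (- k)" by simp
  with False show ?thesis by (simp add: stern_int_def stern_double)
qed

lemma stern_int_double_plus_one:
  "stern_int (2 * k + 1) = stern_int k + stern_int (k + 1)"
proof (cases "k \<ge> 0")
  case True
  then have "nat (2 * k + 1) = 2 * nat k + 1" "nat (k + 1) = nat k + 1" by simp_all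
  with True show ?thesis
    using stern_double_plus_one[of "nat k"] by (simp add: stern_int_def)
next
  case False
  define m where "m = nat (- k - 1)"
  have k: "k = - int m - 1" using False m_def by simp
  have "nat (- (2 * k + 1)) = 2 * m + 1" using k by simp
  then have "stern_int (2 * k + 1) = - stern (2 * m + 1)"
    using k by (simp add: stern_int_neg)
  moreover have "stern_int k = - stern (m + 1)"
    using k by (simp add: stern_int_neg nat_add_distrib)
  moreover have "stern_int (k + 1) = - stern m"
    using k by (cases "m = 0") (simp_all add: stern_int_def stern_0)
  ultimately show ?thesis using stern_double_plus_one[of m] by simp
qed

lemma stern_2: "stern 2 = [:0, 1:]"
  using stern_double[of 1] stern_1 by (simp del: One_nat_def)

lemma stern_3: "stern 3 = [:1, 1:]"
  using stern_double_plus_one[of 1] stern_1 stern_2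
  by (simp del: One_nat_def add: one_pCons)

lemma stern_4: "stern 4 = [:0, 0, 1:]"
  using stern_double[of 2] by (simp add: stern_2)

lemma stern_reflection_difference_base:
  assumes "i \<le> 2"
  shows "stern (4 - i) - stern (2 + i) = [:0, 1:] * [:-1, 1:] * stern_int (1 - int i)"
proof -
  consider "i = 0" | "i = 1" | "i = 2" using assms by linarith
  then show ?thesis
  proof cases
    case 1
    then show ?thesis
      by (simp add: stern_int_def stern_1[unfolded One_nat_def] stern_2 stern_4)
  next
    case 2
    then show ?thesis by (simp add: stern_int_def stern_0 stern_3)
  next
    case 3
    then show ?thesis
      by (simp add: stern_int_def stern_1[unfolded One_nat_def] stern_2 stern_4)
  qed
qed

lemma stern_reflection_difference:
  assumes "i \<le> 2 ^ (m + 1)"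
  shows "stern (2 ^ (m + 2) - i) - stern (2 ^ (m + 1) + i)
           = [:0, 1:] * [:-1, 1:] * stern_int (2 ^ m - int i)"
  using assms
proof (induction m arbitrary: i)
  case 0
  then show ?case using stern_reflection_difference_base[of i] by simp
next
  case (Suc m)
  let ?t = "[:0, 1:] :: int poly" and ?c = "[:0, 1:] * [:-1, 1:] :: int poly"
  show ?case
  proof (cases "even i")
    case True
    then obtain j where i: "i = 2 * j" by auto
    have j: "j \<le> 2 ^ (m + 1)" using Suc.prems i by simp
    have up: "2 ^ (Suc m + 2) - i = 2 * (2 ^ (m + 2) - j)"
      and down: "2 ^ (Suc m + 1) + i = 2 * (2 ^ (m + 1) + j)"
      and mid: "(2::int) ^ Suc m - int i = 2 * (2 ^ m - int j)"
      using i j by simp_all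
    have "stern (2 ^ (Suc m + 2) - i) - stern (2 ^ (Suc m + 1) + i)
          = ?t * (stern (2 ^ (m + 2) - j) - stern (2 ^ (m + 1) + j))"
      unfolding up down stern_double by (simp add: algebra_simps)
    also have "\<dots> = ?t * (?c * stern_int (2 ^ m - int j))"
      using Suc.IH[OF j] by simp
    also have "\<dots> = ?c * stern_int (2 ^ Suc m - int i)"
      unfolding mid stern_int_double by (simp add: algebra_simps)
    finally show ?thesis .
  next
    case False
    then obtain j where i: "i = 2 * j + 1" using oddE by blast
    have j: "j + 1 \<le> 2 ^ (m + 1)" using Suc.prems i by simp
    have up: "2 ^ (Suc m + 2) - i = 2 * (2 ^ (m + 2) - (j + 1)) + 1"
      and up': "2 ^ (m + 2) - (j + 1) + 1 = 2 ^ (m + 2) - j"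
      and down: "2 ^ (Suc m + 1) + i = 2 * (2 ^ (m + 1) + j) + 1"
      and mid: "(2::int) ^ Suc m - int i = 2 * (2 ^ m - int (j + 1)) + 1"
      and mid': "(2::int) ^ m - int (j + 1) + 1 = 2 ^ m - int j"
      using i j by simp_all
    have "stern (2 ^ (Suc m + 2) - i) - stern (2 ^ (Suc m + 1) + i)
          = (stern (2 ^ (m + 2) - (j + 1)) - stern (2 ^ (m + 1) + (j + 1)))
            + (stern (2 ^ (m + 2) - j) - stern (2 ^ (m + 1) + j))"
      unfolding up down stern_double_plus_one up' by (simp add: algebra_simps)
    also have "\<dots> = ?c * (stern_int (2 ^ m - int (j + 1)) + stern_int (2 ^ m - int j))"
      using Suc.IH[OF j] Suc.IH[of j] j by (simp add: algebra_simps)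
    also have "\<dots> = ?c * stern_int (2 ^ Suc m - int i)"
      unfolding mid stern_int_double_plus_one mid' ..
    finally show ?thesis .
  qed
qed

theorem theorem2p3:
  fixes n i :: nat
  assumes "n \<ge> 1"
  shows "(i \<le> 2 ^ (n - 1) \<longrightarrow>
           stern (2 ^ (n + 1) - i) - stern (2 ^ n + i)
             = [:0, 1:] * [:-1, 1:] * stern (2 ^ (n - 1) - i))
       \<and> (2 ^ (n - 1) < i \<and> i \<le> 2 ^ n \<longrightarrow>
           stern (2 ^ (n + 1) - i) - stern (2 ^ n + i)
             = - ([:0, 1:] * [:-1, 1:] * stern (i - 2 ^ (n - 1))))"
proof -
  obtain m where n: "n = m + 1" using assms by (metis le_add_diff_inverse2)
  show ?thesis
  proof (intro conjI impI)
    assume small: "i \<le> 2 ^ (n - 1)"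
    then have "i \<le> 2 ^ (m + 1)" using n by simp
    moreover have "stern_int (2 ^ m - int i) = stern (2 ^ m - i)"
      using small n by (simp add: stern_int_nonneg of_nat_diff nat_diff_distrib nat_power_eq)
    ultimately show "stern (2 ^ (n + 1) - i) - stern (2 ^ n + i)
             = [:0, 1:] * [:-1, 1:] * stern (2 ^ (n - 1) - i)"
      using stern_reflection_difference[of i m] n by simp
  next
    assume large: "2 ^ (n - 1) < i \<and> i \<le> 2 ^ n"
    then have "i \<le> 2 ^ (m + 1)" using n by simp
    moreover have "stern_int (2 ^ m - int i) = - stern (i - 2 ^ m)"
      using large n by (simp add: stern_int_neg nat_diff_distrib nat_power_eq)
    ultimately show "stern (2 ^ (n + 1) - i) - stern (2 ^ n + i)
             = - ([:0, 1:] * [:-1, 1:] * stern (i - 2 ^ (n - 1)))"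
      using stern_reflection_difference[of i m] n by simp
  qed
qed

end
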